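(* Under the multi-view latent factor model described in the context, let $\eta(x)=\mathbb{P}(Y=1\mid X=x)$ be the regression function of the label on a single view, and let $f^\ast(x)=1$ if $\eta(x)\ge 1/2$ and $f^\ast(x)=-1$ otherwise be the Bayes classification rule. Then there exist functions $\tilde\eta$ and $\tilde f^\ast$ on $\mathbb{R}^K$ such that $\eta(x)=\tilde\eta(U^Tx)$ and $f^\ast(x)=\tilde f^\ast(U^Tx)$ for all $x$.
   Context: Multi-view latent factor model: a sample consists of a latent vector $Z\in\mathbb{R}^K$, a label $Y\in\{-1,1\}$, and views $X\in\mathbb{R}^d$. The pair $(Z,Y)$ is drawn from a distribution $\pi(Z,Y)$ such that the conditional distribution of $Z$ given $Y$ has a density. Given $Z$, the views are drawn independently from a continuous conditional distribution $f(X\mid Z)$ of factor form $X=BZ+\epsilon$, where $B=(b_1,\dots,b_K)\in\mathbb{R}^{d\times K}$, $\epsilon$ is a mean-zero random vector independent of $Z$ (independent across views and samples), $B^TB=\Lambda=\mathrm{diag}(\lambda_1,\dots,\lambda_K)$ with $\lambda_1\ge\dots\ge\lambda_K>0$, $\mathrm{Var}(Z)=I_K$, and $(I_d-B(B^TB)^{-1}B^T)\epsilon$ is independent of $B^T\epsilon$. The label $Y$ is conditionally independent of the views given $Z$. Write $U=B\Lambda^{-1/2}$. *)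

theory Defs
  imports "HOL-Probability.Probability"
begin

definition indep_rv ::
  "'a measure \<Rightarrow> ('a \<Rightarrow> 'b::topological_space) \<Rightarrow> ('a \<Rightarrow> 'c::topological_space) \<Rightarrow> bool" where
  "indep_rv M X1 X2 \<longleftrightarrow>
     (\<forall>A \<in> sets borel. \<forall>C \<in> sets borel.
        measure M {\<omega>\<in>space M. X1 \<omega> \<in> A \<and> X2 \<omega> \<in> C}
        = measure M {\<omega>\<in>space M. X1 \<omega> \<in> A} * measure M {\<omega>\<in>space M. X2 \<omega> \<in> C})"

definition cond_indep_given ::
  "'a measure \<Rightarrow> ('a \<Rightarrow> 'b::topological_space) \<Rightarrow> ('a \<Rightarrow> 'c::topological_space)
     \<Rightarrow> ('a \<Rightarrow> 'e::topological_space) \<Rightarrow> bool" where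
  "cond_indep_given M Y X Z \<longleftrightarrow>
     (\<forall>A \<in> sets borel. \<forall>C \<in> sets borel.
        AE \<omega> in M.
          real_cond_exp M (vimage_algebra (space M) Z borel)
              (\<lambda>\<omega>. indicator A (Y \<omega>) * indicator C (X \<omega>)) \<omega>
          = real_cond_exp M (vimage_algebra (space M) Z borel) (\<lambda>\<omega>. indicator A (Y \<omega>)) \<omega>
            * real_cond_exp M (vimage_algebra (space M) Z borel) (\<lambda>\<omega>. indicator C (X \<omega>)) \<omega>)"

text \<open>A (version of the) regression function eta(x) = P(Y = 1 | X = x):
  a Borel function eta with eta(X) = E[1{Y=1} | sigma(X)] almost surely.\<close>
definition is_regression_fn ::
  "'a measure \<Rightarrow> ('a \<Rightarrow> real) \<Rightarrow> ('a \<Rightarrow> 'c::topological_space) \<Rightarrow> ('c \<Rightarrow> real) \<Rightarrow> bool" where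
  "is_regression_fn M Y X eta \<longleftrightarrow>
     eta \<in> borel_measurable borel \<and>
     (AE \<omega> in M. eta (X \<omega>) =
        real_cond_exp M (vimage_algebra (space M) X borel)
          (\<lambda>\<omega>. if Y \<omega> = 1 then 1 else 0) \<omega>)"

definition bayes_rule :: "('c \<Rightarrow> real) \<Rightarrow> 'c \<Rightarrow> real" where
  "bayes_rule eta x = (if eta x \<ge> 1/2 then 1 else -1)"

end

theory Submission
  imports Defs
begin

(* Let P = B (B^T B)^-1 B^T = U U^T be the projection onto the column space of B and
   W = (I - P) eps. Then X = U (U^T X) + W, and U^T X = (U^T B) Z + Lambda^(-1/2) B^T eps is a
   function of Y, Z and B^T eps. Conditional independence of Y and X given Z, together with the
   independence of eps and Z, makes eps independent of (Y, Z); since W is independent of B^T eps,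
   W is then independent of (Y, U^T X). So W is pure noise once U^T X is known: conditioning on
   X is the same as conditioning on U^T X, and P(Y = 1 | X) = eta_t (U^T X), where eta_t is a
   Radon-Nikodym derivative representing P(Y = 1 | U^T X). *)

section \<open>Diagonal matrices and the scaled loading matrix\<close>

definition diag_mat :: "('n::finite \<Rightarrow> 'a::zero) \<Rightarrow> 'a^'n^'n" where
  "diag_mat d = (\<chi> i j. if i = j then d i else 0)"

lemma matrix_mul_diag_mat:
  fixes A :: "'a::semiring_1^'n::finite^'m::finite"
  shows "A ** diag_mat d = (\<chi> r c. A $ r $ c * d c)"
  by (simp add: vec_eq_iff matrix_matrix_mult_def diag_mat_def if_distrib cong: if_cong)

lemma diag_mat_mult:
  fixes a b :: "'n::finite \<Rightarrow> 'a::semiring_1"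
  shows "diag_mat a ** diag_mat b = diag_mat (\<lambda>i. a i * b i)"
  by (simp add: matrix_mul_diag_mat) (simp add: diag_mat_def vec_eq_iff)

lemma transpose_diag_mat: "transpose (diag_mat d) = diag_mat d"
  by (simp add: diag_mat_def transpose_def vec_eq_iff)

lemma diag_mat_one: "diag_mat (\<lambda>_. 1) = mat 1"
  by (simp add: diag_mat_def mat_def)

lemma
  fixes A :: "'a::semiring_1^'n::finite^'n"
  assumes "invertible A"
  shows matrix_inv_mult_right: "A ** matrix_inv A = mat 1"
    and matrix_inv_mult_left: "matrix_inv A ** A = mat 1"
  using someI_ex[OF assms[unfolded invertible_def]] unfolding matrix_inv_def by blast+

lemma matrix_inv_unique:
  fixes A C :: "'a::semiring_1^'n::finite^'n"
  assumes "A ** C = mat 1" and "C ** A = mat 1"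
  shows "matrix_inv A = C"
proof -
  have "invertible A"
    using assms unfolding invertible_def by blast
  have "matrix_inv A = (C ** A) ** matrix_inv A"
    using assms(2) by simp
  also have "\<dots> = C"
    using matrix_inv_mult_right[OF \<open>invertible A\<close>] by (simp flip: matrix_mul_assoc)
  finally show ?thesis .
qed

lemma invertible_diag_mat:
  fixes d :: "'n::finite \<Rightarrow> 'a::field"
  assumes "\<And>i. d i \<noteq> 0"
  shows "invertible (diag_mat d)"
  unfolding invertible_def
  by (rule exI[of _ "diag_mat (\<lambda>i. inverse (d i))"]) (simp add: diag_mat_mult assms diag_mat_one)

lemma matrix_inv_diag_mat:
  fixes d :: "'n::finite \<Rightarrow> 'a::field"
  assumes "\<And>i. d i \<noteq> 0"
  shows "matrix_inv (diag_mat d) = diag_mat (\<lambda>i. inverse (d i))"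
  by (rule matrix_inv_unique) (simp_all add: diag_mat_mult assms diag_mat_one)

lemma projection_decomposition:
  fixes B :: "real^'k::finite^'d::finite"
  defines "P \<equiv> B ** matrix_inv (transpose B ** B) ** transpose B"
  assumes "invertible (transpose B ** B)"
  shows "B *v z + e = P *v (B *v z + e) + (mat 1 - P) *v e"
proof -
  have "P ** B = B"
    using matrix_inv_mult_left[OF assms(2)] by (simp add: P_def flip: matrix_mul_assoc)
  then have "P *v (B *v z) = B *v z"
    by (simp add: matrix_vector_mul_assoc)
  then show ?thesis
    by (simp add: matrix_vector_right_distrib matrix_vector_mult_diff_rdistrib)
qed

lemma scaled_loadings_eq:
  fixes B :: "real^'k::finite^'d::finite"
  shows "(\<chi> r c. B $ r $ c / sqrt (lam c)) = B ** diag_mat (\<lambda>c. inverse (sqrt (lam c)))"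
  by (simp add: matrix_mul_diag_mat divide_inverse)

lemma scaled_loadings_outer_product:
  fixes B :: "real^'k::finite^'d::finite" and lam :: "'k \<Rightarrow> real"
  defines "U \<equiv> \<chi> r c. B $ r $ c / sqrt (lam c)"
  assumes BtB: "transpose B ** B = diag_mat lam" and pos: "\<And>i. lam i > 0"
  shows "U ** transpose U = B ** matrix_inv (transpose B ** B) ** transpose B"
proof -
  have "diag_mat (\<lambda>c. inverse (sqrt (lam c))) ** diag_mat (\<lambda>c. inverse (sqrt (lam c)))
      = matrix_inv (transpose B ** B)"
    using pos by (simp add: BtB diag_mat_mult matrix_inv_diag_mat less_imp_neq[symmetric] abs_of_pos
        flip: inverse_mult_distrib)
  then show ?thesis
    unfolding U_def scaled_loadings_eq matrix_transpose_mul transpose_diag_mat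
    by (metis matrix_mul_assoc)
qed

lemma scaled_loadings_decomposition:
  fixes B :: "real^'k::finite^'d::finite" and lam :: "'k \<Rightarrow> real"
  defines "U \<equiv> \<chi> r c. B $ r $ c / sqrt (lam c)"
    and "P \<equiv> B ** matrix_inv (transpose B ** B) ** transpose B"
  assumes BtB: "transpose B ** B = diag_mat lam" and pos: "\<And>i. lam i > 0"
  shows "B *v z + e = U *v (transpose U *v (B *v z + e)) + (mat 1 - P) *v e"
proof -
  have "invertible (transpose B ** B)"
    using pos by (simp add: BtB invertible_diag_mat less_imp_neq[symmetric])
  then have decomp: "B *v z + e = P *v (B *v z + e) + (mat 1 - P) *v e"
    unfolding P_def by (rule projection_decomposition)
  have "P = U ** transpose U"
    unfolding P_def U_def using BtB pos by (rule scaled_loadings_outer_product[symmetric])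
  then have "P *v (B *v z + e) = U *v (transpose U *v (B *v z + e))"
    by (simp only: matrix_vector_mul_assoc)
  with decomp show ?thesis
    by simp
qed

lemma transpose_scaled_loadings_mult:
  fixes B :: "real^'k::finite^'d::finite" and lam :: "'k \<Rightarrow> real"
  defines "U \<equiv> \<chi> r c. B $ r $ c / sqrt (lam c)"
  shows "transpose U *v (B *v z + e)
    = (transpose U ** B) *v z + diag_mat (\<lambda>c. inverse (sqrt (lam c))) *v (transpose B *v e)"
  unfolding U_def scaled_loadings_eq matrix_transpose_mul transpose_diag_mat
  by (simp only: matrix_vector_right_distrib matrix_vector_mul_assoc)

lemma borel_measurable_matrix_vector_mult [measurable]:
  "(\<lambda>x. (A :: real^'n::finite^'m::finite) *v x) \<in> borel_measurable borel"
  by (rule borel_measurable_continuous_onI) (rule matrix_vector_mult_linear_continuous_on)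

definition vimage_rectangles ::
    "'a set \<Rightarrow> ('a \<Rightarrow> 'b) \<Rightarrow> 'b measure \<Rightarrow> ('a \<Rightarrow> 'c) \<Rightarrow> 'c measure \<Rightarrow> 'a set set" where
  "vimage_rectangles \<Omega> X N1 Y N2 = {{\<omega>\<in>\<Omega>. X \<omega> \<in> A \<and> Y \<omega> \<in> B} | A B. A \<in> sets N1 \<and> B \<in> sets N2}"

lemma Int_stable_vimage_rectangles: "Int_stable (vimage_rectangles \<Omega> X N1 Y N2)"
  unfolding Int_stable_def vimage_rectangles_def
proof safe
  fix A A' B B' assume "A \<in> sets N1" "B \<in> sets N2" "A' \<in> sets N1" "B' \<in> sets N2"
  then show "\<exists>A'' B''. {\<omega>\<in>\<Omega>. X \<omega> \<in> A \<and> Y \<omega> \<in> B} \<inter> {\<omega>\<in>\<Omega>. X \<omega> \<in> A' \<and> Y \<omega> \<in> B'}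
      = {\<omega>\<in>\<Omega>. X \<omega> \<in> A'' \<and> Y \<omega> \<in> B''} \<and> A'' \<in> sets N1 \<and> B'' \<in> sets N2"
    by (intro exI[of _ "A \<inter> A'"] exI[of _ "B \<inter> B'"]) auto
qed

lemma vimage_rectangles_subset_sets:
  assumes "X \<in> measurable M N1" "Y \<in> measurable M N2"
  shows "vimage_rectangles (space M) X N1 Y N2 \<subseteq> sets M"
  using assms by (auto simp: vimage_rectangles_def)

lemma pair_vimage_in_sigma_vimage_rectangles:
  assumes X: "X \<in> measurable M N1" and Y: "Y \<in> measurable M N2" and C: "C \<in> sets (N1 \<Otimes>\<^sub>M N2)"
  shows "(\<lambda>\<omega>. (X \<omega>, Y \<omega>)) -` C \<inter> space M \<in> sigma_sets (space M) (vimage_rectangles (space M) X N1 Y N2)"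
proof -
  let ?R = "vimage_rectangles (space M) X N1 Y N2"
  have R: "?R \<subseteq> Pow (space M)"
    by (auto simp: vimage_rectangles_def)
  have "X \<in> measurable (sigma (space M) ?R) N1"
  proof (rule measurableI)
    fix A assume "A \<in> sets N1"
    then have "X -` A \<inter> space M \<in> ?R"
      using measurable_space[OF Y] unfolding vimage_rectangles_def
      by (intro CollectI exI[of _ A] exI[of _ "space N2"]) auto
    then show "X -` A \<inter> space (sigma (space M) ?R) \<in> sets (sigma (space M) ?R)"
      using R by auto
  qed (use measurable_space[OF X] R in auto)
  moreover have "Y \<in> measurable (sigma (space M) ?R) N2"
  proof (rule measurableI)
    fix B assume "B \<in> sets N2"
    then have "Y -` B \<inter> space M \<in> ?R"
      using measurable_space[OF X] unfolding vimage_rectangles_def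
      by (intro CollectI exI[of _ "space N1"] exI[of _ B]) auto
    then show "Y -` B \<inter> space (sigma (space M) ?R) \<in> sets (sigma (space M) ?R)"
      using R by auto
  qed (use measurable_space[OF Y] R in auto)
  ultimately have "(\<lambda>\<omega>. (X \<omega>, Y \<omega>)) \<in> measurable (sigma (space M) ?R) (N1 \<Otimes>\<^sub>M N2)"
    by (rule measurable_Pair)
  from measurable_sets[OF this C] show ?thesis
    using R by simp
qed

lemma set_integral_space_Diff:
  fixes h :: "'a \<Rightarrow> real"
  assumes "integrable M h" "A \<in> sets M"
  shows "(\<integral>x \<in> space M - A. h x \<partial>M) = (\<integral>x \<in> space M. h x \<partial>M) - (\<integral>x \<in> A. h x \<partial>M)"
proof -
  have set_int: "set_integrable M A' h" if "A' \<in> sets M" for A'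
    unfolding set_integrable_def by (rule integrable_mult_indicator[OF that assms(1)])
  have "space M = A \<union> (space M - A)"
    using assms(2) sets.sets_into_space by blast
  then have "(\<integral>x \<in> space M. h x \<partial>M) = (\<integral>x \<in> A \<union> (space M - A). h x \<partial>M)"
    by simp
  also have "\<dots> = (\<integral>x \<in> A. h x \<partial>M) + (\<integral>x \<in> space M - A. h x \<partial>M)"
    using assms(2) by (intro set_integral_Un set_int) auto
  finally show ?thesis
    by simp
qed

lemma set_integral_eq_on_sigma_sets:
  fixes f g :: "'a \<Rightarrow> real"
  assumes f: "integrable M f" and g: "integrable M g"
    and G: "Int_stable G" "G \<subseteq> sets M"
    and space: "(\<integral>x \<in> space M. f x \<partial>M) = (\<integral>x \<in> space M. g x \<partial>M)"
    and eq: "\<And>a. a \<in> G \<Longrightarrow> (\<integral>x \<in> a. f x \<partial>M) = (\<integral>x \<in> a. g x \<partial>M)"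
    and A: "A \<in> sigma_sets (space M) G"
  shows "(\<integral>x \<in> A. f x \<partial>M) = (\<integral>x \<in> A. g x \<partial>M)"
proof -
  have sigma_G: "sigma_sets (space M) G \<subseteq> sets M"
    using G(2) by (simp add: sets.sigma_sets_subset)
  have "G \<subseteq> Pow (space M)"
    using G(2) sets.sets_into_space by blast
  from G(1) this A show ?thesis
  proof (induction rule: sigma_sets_induct_disjoint)
    case (basic A)
    then show ?case using eq by blast
  next
    case empty
    then show ?case by (simp add: set_lebesgue_integral_def)
  next
    case (compl A)
    then show ?case
      using f g space sigma_G by (auto simp: set_integral_space_Diff)
  next
    case (union A)
    have A: "\<And>i. A i \<in> sets M"
      using union(2) sigma_G by blast
    have disj: "\<And>i j. i \<noteq> j \<Longrightarrow> A i \<inter> A j = {}"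
      using union(1) unfolding disjoint_family_on_def by blast
    have set_int: "set_integrable M (\<Union>i. A i) h" if "integrable M h" for h :: "'a \<Rightarrow> real"
      unfolding set_integrable_def using A by (intro integrable_mult_indicator that) blast
    have "(\<integral>x \<in> (\<Union>i. A i). f x \<partial>M) = (\<Sum>i. (\<integral>x \<in> A i. f x \<partial>M))"
      by (rule lebesgue_integral_countable_add[OF A disj set_int[OF f]])
    also have "\<dots> = (\<Sum>i. (\<integral>x \<in> A i. g x \<partial>M))"
      using union(3) by simp
    also have "\<dots> = (\<integral>x \<in> (\<Union>i. A i). g x \<partial>M)"
      by (rule lebesgue_integral_countable_add[OF A disj set_int[OF g], symmetric])
    finally show ?case .
  qed
qed

lemma (in prob_space) sigma_finite_subalgebra_vimage_algebra:
  assumes "X \<in> measurable M N"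
  shows "sigma_finite_subalgebra M (vimage_algebra (space M) X N)"
proof (rule finite_measure_subalgebra_is_sigma_finite)
  have "subalgebra M (vimage_algebra (space M) X N)"
    using assms unfolding subalgebra_def measurable_iff_sets by simp
  then show "finite_measure_subalgebra M (vimage_algebra (space M) X N)"
    by unfold_locales
qed

lemma absolutely_continuous_distr:
  assumes "absolutely_continuous M M'" "sets M' = sets M" "V \<in> measurable M N"
  shows "absolutely_continuous (distr M N V) (distr M' N V)"
proof -
  have "V \<in> measurable M' N"
    by (subst measurable_cong_sets[OF assms(2) refl]) (rule assms(3))
  moreover have "space M' = space M"
    by (rule sets_eq_imp_space_eq[OF assms(2)])
  ultimately show ?thesis
    using assms(1,3) by (auto simp: absolutely_continuous_def null_sets_distr_iff)
qed

lemma (in prob_space) set_integral_indicator_comp: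
  assumes "G \<in> events" "Y \<in> measurable M N" "A \<in> sets N"
  shows "(\<integral>\<omega>\<in>G. indicator A (Y \<omega>) \<partial>M) = prob {\<omega>\<in>G. Y \<omega> \<in> A}"
proof -
  have "{\<omega>\<in>G. Y \<omega> \<in> A} = G \<inter> (Y -` A \<inter> space M)"
    using sets.sets_into_space[OF assms(1)] by auto
  then have "{\<omega>\<in>G. Y \<omega> \<in> A} \<in> events"
    using assms by (simp add: sets.Int measurable_sets)
  moreover have "(\<integral>\<omega>\<in>G. indicator A (Y \<omega>) \<partial>M) = (\<integral>\<omega>. (indicator {\<omega>\<in>G. Y \<omega> \<in> A} \<omega> :: real) \<partial>M)"
    unfolding set_lebesgue_integral_def
    by (rule Bochner_Integration.integral_cong) (auto split: split_indicator)
  ultimately show ?thesis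
    by simp
qed

lemma additive_noise_event_in_sigma_vimage_rectangles:
  fixes Z :: "'a \<Rightarrow> 'c::topological_space"
    and eps X :: "'a \<Rightarrow> 'x::{second_countable_topology, real_normed_vector}"
  assumes [measurable]: "X \<in> borel_measurable M" "Z \<in> borel_measurable M" "\<phi> \<in> borel_measurable borel"
      "D \<in> sets borel" "E \<in> sets borel"
    and X: "\<forall>\<omega>\<in>space M. X \<omega> = \<phi> (Z \<omega>) + eps \<omega>"
  shows "{\<omega>\<in>space M. Z \<omega> \<in> D \<and> eps \<omega> \<in> E} \<in> sigma_sets (space M) (vimage_rectangles (space M) X borel Z borel)"
proof -
  have "{\<omega>\<in>space M. Z \<omega> \<in> D \<and> eps \<omega> \<in> E}
      = (\<lambda>\<omega>. (X \<omega>, Z \<omega>)) -` {q \<in> space (borel \<Otimes>\<^sub>M borel). snd q \<in> D \<and> fst q - \<phi> (snd q) \<in> E} \<inter> space M"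
    using X by (auto simp: space_pair_measure)
  then show ?thesis
    by (simp only:) (rule pair_vimage_in_sigma_vimage_rectangles; measurable)
qed

section \<open>Independence of random variables\<close>

lemma (in prob_space) indep_rvD:
  assumes "indep_rv M X Y" "A \<in> sets borel" "C \<in> sets borel"
  shows "prob {\<omega>\<in>space M. X \<omega> \<in> A \<and> Y \<omega> \<in> C} = prob {\<omega>\<in>space M. X \<omega> \<in> A} * prob {\<omega>\<in>space M. Y \<omega> \<in> C}"
  using assms unfolding indep_rv_def by blast

lemma (in prob_space) indep_rv_PairI:
  fixes W :: "'a \<Rightarrow> 'b::topological_space"
    and V1 :: "'a \<Rightarrow> 'c::second_countable_topology" and V2 :: "'a \<Rightarrow> 'd::second_countable_topology"
  assumes [measurable]: "random_variable borel W" "random_variable borel V1" "random_variable borel V2"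
    and rect: "\<And>A B E. A \<in> sets borel \<Longrightarrow> B \<in> sets borel \<Longrightarrow> E \<in> sets borel \<Longrightarrow>
      prob {\<omega>\<in>space M. V1 \<omega> \<in> A \<and> V2 \<omega> \<in> B \<and> W \<omega> \<in> E}
      = prob {\<omega>\<in>space M. V1 \<omega> \<in> A \<and> V2 \<omega> \<in> B} * prob {\<omega>\<in>space M. W \<omega> \<in> E}"
  shows "indep_rv M W (\<lambda>\<omega>. (V1 \<omega>, V2 \<omega>))"
proof -
  let ?G = "sets (vimage_algebra (space M) W borel)"
  let ?R = "vimage_rectangles (space M) V1 borel V2 borel"
  have "indep_set ?G ?R"
  proof (rule indep_setI)
    fix a b assume "a \<in> ?G" "b \<in> ?R"
    then obtain E A B where [measurable]: "E \<in> sets borel" "A \<in> sets borel" "B \<in> sets borel"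
      and a: "a = {\<omega>\<in>space M. W \<omega> \<in> E}" and b: "b = {\<omega>\<in>space M. V1 \<omega> \<in> A \<and> V2 \<omega> \<in> B}"
      by (auto simp: sets_vimage_algebra2 vimage_rectangles_def vimage_def Int_def)
    have "a \<inter> b = {\<omega>\<in>space M. V1 \<omega> \<in> A \<and> V2 \<omega> \<in> B \<and> W \<omega> \<in> E}"
      unfolding a b by auto
    then show "prob (a \<inter> b) = prob a * prob b"
      by (simp add: rect a b)
  qed (auto simp: sets_vimage_algebra2 vimage_rectangles_def)
  moreover have "Int_stable ?G"
    by (auto simp: Int_stable_def)
  ultimately have indep: "indep_set (sigma_sets (space M) ?G) (sigma_sets (space M) ?R)"
    by (rule indep_set_sigma_sets[OF _ _ Int_stable_vimage_rectangles])
  show ?thesis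
    unfolding indep_rv_def
  proof (intro ballI)
    fix E C assume [measurable]: "E \<in> sets (borel :: 'b measure)" "C \<in> sets (borel :: ('c \<times> 'd) measure)"
    then have "C \<in> sets (borel \<Otimes>\<^sub>M borel)"
      by (simp only: borel_prod)
    then have "(\<lambda>\<omega>. (V1 \<omega>, V2 \<omega>)) -` C \<inter> space M \<in> sigma_sets (space M) ?R"
      by (rule pair_vimage_in_sigma_vimage_rectangles[rotated 2]) simp_all
    moreover have "W -` E \<inter> space M \<in> sigma_sets (space M) ?G"
      by (intro sigma_sets.Basic in_vimage_algebra) simp
    ultimately have "prob ((W -` E \<inter> space M) \<inter> ((\<lambda>\<omega>. (V1 \<omega>, V2 \<omega>)) -` C \<inter> space M))
        = prob (W -` E \<inter> space M) * prob ((\<lambda>\<omega>. (V1 \<omega>, V2 \<omega>)) -` C \<inter> space M)"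
      by (intro indep_setD[OF indep])
    moreover have "(W -` E \<inter> space M) \<inter> ((\<lambda>\<omega>. (V1 \<omega>, V2 \<omega>)) -` C \<inter> space M)
        = {\<omega>\<in>space M. W \<omega> \<in> E \<and> (V1 \<omega>, V2 \<omega>) \<in> C}"
      "W -` E \<inter> space M = {\<omega>\<in>space M. W \<omega> \<in> E}"
      "(\<lambda>\<omega>. (V1 \<omega>, V2 \<omega>)) -` C \<inter> space M = {\<omega>\<in>space M. (V1 \<omega>, V2 \<omega>) \<in> C}"
      by auto
    ultimately show "prob {\<omega>\<in>space M. W \<omega> \<in> E \<and> (V1 \<omega>, V2 \<omega>) \<in> C}
        = prob {\<omega>\<in>space M. W \<omega> \<in> E} * prob {\<omega>\<in>space M. (V1 \<omega>, V2 \<omega>) \<in> C}"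
      by simp
  qed
qed

lemma (in prob_space) indep_rv_compose:
  fixes f :: "'b::topological_space \<Rightarrow> 'd::topological_space"
    and g :: "'c::topological_space \<Rightarrow> 'e::topological_space"
  assumes "indep_rv M X Y" "f \<in> borel_measurable borel" "g \<in> borel_measurable borel"
  shows "indep_rv M (\<lambda>\<omega>. f (X \<omega>)) (\<lambda>\<omega>. g (Y \<omega>))"
  unfolding indep_rv_def
proof (intro ballI)
  fix A C assume "A \<in> sets (borel :: 'd measure)" "C \<in> sets (borel :: 'e measure)"
  then have "f -` A \<in> sets borel" "g -` C \<in> sets borel"
    using measurable_sets[OF assms(2)] measurable_sets[OF assms(3)] by auto
  from indep_rvD[OF assms(1) this] show "prob {\<omega>\<in>space M. f (X \<omega>) \<in> A \<and> g (Y \<omega>) \<in> C}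
      = prob {\<omega>\<in>space M. f (X \<omega>) \<in> A} * prob {\<omega>\<in>space M. g (Y \<omega>) \<in> C}"
    by simp
qed

lemma (in prob_space) indep_rv_Pair_compose:
  fixes E :: "'a \<Rightarrow> 'e::topological_space" and V :: "'a \<Rightarrow> 'v::second_countable_topology"
    and f :: "'e \<Rightarrow> 'b::topological_space" and g :: "'e \<Rightarrow> 'c::second_countable_topology"
  assumes indep_E_V: "indep_rv M E V" and indep_f_g: "indep_rv M (\<lambda>\<omega>. f (E \<omega>)) (\<lambda>\<omega>. g (E \<omega>))"
    and [measurable]: "random_variable borel E" "random_variable borel V"
      "f \<in> borel_measurable borel" "g \<in> borel_measurable borel"
  shows "indep_rv M (\<lambda>\<omega>. f (E \<omega>)) (\<lambda>\<omega>. (V \<omega>, g (E \<omega>)))"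
proof (rule indep_rv_PairI)
  fix A :: "'v set" and B :: "'c set" and e :: "'b set"
  assume [measurable]: "A \<in> sets borel" "B \<in> sets borel" "e \<in> sets borel"
  have [measurable]: "g -` B \<in> sets borel" "g -` B \<inter> f -` e \<in> sets borel"
    using measurable_sets[of g borel borel] measurable_sets[of f borel borel] by auto
  have "prob {\<omega>\<in>space M. V \<omega> \<in> A \<and> g (E \<omega>) \<in> B \<and> f (E \<omega>) \<in> e}
      = prob {\<omega>\<in>space M. E \<omega> \<in> g -` B \<inter> f -` e \<and> V \<omega> \<in> A}"
    by (rule arg_cong[where f = prob]) auto
  also have "\<dots> = prob {\<omega>\<in>space M. E \<omega> \<in> g -` B \<inter> f -` e} * prob {\<omega>\<in>space M. V \<omega> \<in> A}"
    by (rule indep_rvD[OF indep_E_V]) simp_all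
  also have "prob {\<omega>\<in>space M. E \<omega> \<in> g -` B \<inter> f -` e}
      = prob {\<omega>\<in>space M. f (E \<omega>) \<in> e \<and> g (E \<omega>) \<in> B}"
    by (rule arg_cong[where f = prob]) auto
  also have "\<dots> = prob {\<omega>\<in>space M. f (E \<omega>) \<in> e} * prob {\<omega>\<in>space M. g (E \<omega>) \<in> B}"
    by (rule indep_rvD[OF indep_f_g]) simp_all
  finally have triple: "prob {\<omega>\<in>space M. V \<omega> \<in> A \<and> g (E \<omega>) \<in> B \<and> f (E \<omega>) \<in> e}
      = prob {\<omega>\<in>space M. f (E \<omega>) \<in> e} * prob {\<omega>\<in>space M. g (E \<omega>) \<in> B}
        * prob {\<omega>\<in>space M. V \<omega> \<in> A}" .
  have "prob {\<omega>\<in>space M. V \<omega> \<in> A \<and> g (E \<omega>) \<in> B}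
      = prob {\<omega>\<in>space M. E \<omega> \<in> g -` B \<and> V \<omega> \<in> A}"
    by (rule arg_cong[where f = prob]) auto
  also have "\<dots> = prob {\<omega>\<in>space M. E \<omega> \<in> g -` B} * prob {\<omega>\<in>space M. V \<omega> \<in> A}"
    by (rule indep_rvD[OF indep_E_V]) simp_all
  finally show "prob {\<omega>\<in>space M. V \<omega> \<in> A \<and> g (E \<omega>) \<in> B \<and> f (E \<omega>) \<in> e}
      = prob {\<omega>\<in>space M. V \<omega> \<in> A \<and> g (E \<omega>) \<in> B} * prob {\<omega>\<in>space M. f (E \<omega>) \<in> e}"
    by (simp add: triple)
qed simp_all

lemma (in prob_space) indep_rv_distribution_eq:
  fixes X :: "'a \<Rightarrow> 'b::topological_space" and Y :: "'a \<Rightarrow> 'c::topological_space"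
  assumes indep: "indep_rv M X Y" and [measurable]: "random_variable borel X" "random_variable borel Y"
  shows "distr M borel X \<Otimes>\<^sub>M distr M borel Y = distr M (borel \<Otimes>\<^sub>M borel) (\<lambda>\<omega>. (X \<omega>, Y \<omega>))"
proof (rule pair_measure_eqI)
  show "sigma_finite_measure (distr M borel X)" "sigma_finite_measure (distr M borel Y)"
    by (simp_all add: prob_space_distr prob_space_imp_sigma_finite)
  fix A C assume "A \<in> sets (distr M borel X)" "C \<in> sets (distr M borel Y)"
  then have [measurable]: "A \<in> sets borel" "C \<in> sets borel"
    by simp_all
  have "(\<lambda>\<omega>. (X \<omega>, Y \<omega>)) -` (A \<times> C) \<inter> space M = {\<omega>\<in>space M. X \<omega> \<in> A \<and> Y \<omega> \<in> C}"
    "X -` A \<inter> space M = {\<omega>\<in>space M. X \<omega> \<in> A}" "Y -` C \<inter> space M = {\<omega>\<in>space M. Y \<omega> \<in> C}"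
    by auto
  then show "emeasure (distr M borel X) A * emeasure (distr M borel Y) C
      = emeasure (distr M (borel \<Otimes>\<^sub>M borel) (\<lambda>\<omega>. (X \<omega>, Y \<omega>))) (A \<times> C)"
    by (simp add: emeasure_distr emeasure_eq_measure indep_rvD[OF indep] ennreal_mult')
qed simp

section \<open>Conditional expectations\<close>

lemma (in prob_space) real_cond_exp_indicator_indep:
  fixes E :: "'a \<Rightarrow> 'b::topological_space" and Z :: "'a \<Rightarrow> 'c::topological_space"
  assumes indep: "indep_rv M E Z"
    and [measurable]: "random_variable borel E" "random_variable borel Z" "A \<in> sets borel"
  shows "AE \<omega> in M. real_cond_exp M (vimage_algebra (space M) Z borel) (\<lambda>\<omega>. indicator A (E \<omega>)) \<omega>
    = prob {\<omega>\<in>space M. E \<omega> \<in> A}"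
proof -
  define F where "F = vimage_algebra (space M) Z borel"
  interpret F: sigma_finite_subalgebra M F
    unfolding F_def by (rule sigma_finite_subalgebra_vimage_algebra) simp
  show ?thesis
    unfolding F_def[symmetric]
  proof (rule F.real_cond_exp_charact)
    fix G assume "G \<in> sets F"
    then obtain D where [measurable]: "D \<in> sets borel" and G: "G = {\<omega>\<in>space M. Z \<omega> \<in> D}"
      unfolding F_def by (auto simp: sets_vimage_algebra2 vimage_def Int_def)
    have "(\<integral>\<omega>\<in>G. indicator A (E \<omega>) \<partial>M) = prob {\<omega>\<in>space M. E \<omega> \<in> A \<and> Z \<omega> \<in> D}"
      by (subst set_integral_indicator_comp[where N = borel]) (auto simp: G intro!: arg_cong[where f = prob])
    also have "\<dots> = prob {\<omega>\<in>space M. E \<omega> \<in> A} * prob G"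
      unfolding G by (simp add: indep_rvD[OF indep])
    also have "\<dots> = (\<integral>\<omega>\<in>G. prob {\<omega>\<in>space M. E \<omega> \<in> A} \<partial>M)"
      by (subst set_integral_const) (simp_all add: G)
    finally show "(\<integral>\<omega>\<in>G. indicator A (E \<omega>) \<partial>M) = (\<integral>\<omega>\<in>G. prob {\<omega>\<in>space M. E \<omega> \<in> A} \<partial>M)" .
  next
    show "integrable M (\<lambda>\<omega>. indicator A (E \<omega>) :: real)"
      by (rule integrable_const_bound[where B = 1]) (auto split: split_indicator)
  qed simp_all
qed

lemma (in prob_space) integral_mult_indicator_indep:
  fixes E :: "'a \<Rightarrow> 'b::topological_space" and Z :: "'a \<Rightarrow> 'c::topological_space"
  assumes indep: "indep_rv M E Z"
    and [measurable]: "random_variable borel E" "random_variable borel Z" "A \<in> sets borel"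
      "f \<in> borel_measurable (vimage_algebra (space M) Z borel)"
    and f: "integrable M f"
  shows "(\<integral>\<omega>. f \<omega> * indicator A (E \<omega>) \<partial>M) = prob {\<omega>\<in>space M. E \<omega> \<in> A} * (\<integral>\<omega>. f \<omega> \<partial>M)"
proof -
  interpret F: sigma_finite_subalgebra M "vimage_algebra (space M) Z borel"
    by (rule sigma_finite_subalgebra_vimage_algebra) simp
  have [measurable]: "f \<in> borel_measurable M"
    by (rule measurable_from_subalg[OF F.subalg]) simp
  have "(\<integral>\<omega>. f \<omega> * indicator A (E \<omega>) \<partial>M)
      = (\<integral>\<omega>. f \<omega> * real_cond_exp M (vimage_algebra (space M) Z borel) (\<lambda>\<omega>. indicator A (E \<omega>)) \<omega> \<partial>M)"
  proof (rule F.real_cond_exp_intg(2)[symmetric])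
    show "integrable M (\<lambda>\<omega>. f \<omega> * indicator A (E \<omega>))"
      by (rule Bochner_Integration.integrable_bound[OF f]) (auto split: split_indicator)
  qed simp_all
  also have "\<dots> = (\<integral>\<omega>. f \<omega> * prob {\<omega>\<in>space M. E \<omega> \<in> A} \<partial>M)"
  proof (rule integral_cong_AE)
    have "AE \<omega> in M. real_cond_exp M (vimage_algebra (space M) Z borel) (\<lambda>\<omega>. indicator A (E \<omega>)) \<omega>
        = prob {\<omega>\<in>space M. E \<omega> \<in> A}"
      by (rule real_cond_exp_indicator_indep[OF indep]) simp_all
    then show "AE \<omega> in M. f \<omega> * real_cond_exp M (vimage_algebra (space M) Z borel) (\<lambda>\<omega>. indicator A (E \<omega>)) \<omega>
        = f \<omega> * prob {\<omega>\<in>space M. E \<omega> \<in> A}"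
      by eventually_elim simp
  qed simp_all
  finally show ?thesis
    by simp
qed

lemma (in prob_space) cond_indep_given_set_integral_rectangle:
  fixes Y :: "'a \<Rightarrow> 'b::topological_space" and X :: "'a \<Rightarrow> 'c::topological_space"
    and Z :: "'a \<Rightarrow> 'e::topological_space"
  assumes ci: "cond_indep_given M Y X Z"
    and [measurable]: "random_variable borel Y" "random_variable borel X" "random_variable borel Z"
      "A \<in> sets borel" "C \<in> sets borel" "D \<in> sets borel"
  defines "H \<equiv> {\<omega>\<in>space M. X \<omega> \<in> C \<and> Z \<omega> \<in> D}"
  shows "(\<integral>\<omega>\<in>H. indicator A (Y \<omega>) \<partial>M)
    = (\<integral>\<omega>\<in>H. real_cond_exp M (vimage_algebra (space M) Z borel) (\<lambda>\<omega>. indicator A (Y \<omega>)) \<omega> \<partial>M)"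
proof -
  define F where "F = vimage_algebra (space M) Z borel"
  interpret F: sigma_finite_subalgebra M F
    unfolding F_def by (rule sigma_finite_subalgebra_vimage_algebra) simp
  define p where "p = real_cond_exp M F (\<lambda>\<omega>. indicator A (Y \<omega>))"
  define IZ where "IZ = Z -` D \<inter> space M"
  have [measurable]: "p \<in> borel_measurable F" "p \<in> borel_measurable M" "IZ \<in> sets F" "IZ \<in> sets M"
    unfolding p_def IZ_def F_def by (simp_all add: in_vimage_algebra)
  have "integrable M p"
    unfolding p_def
    by (rule F.real_cond_exp_int(1), rule integrable_const_bound[where B = 1]) (auto split: split_indicator)
  have ci_AC: "AE \<omega> in M.
      real_cond_exp M F (\<lambda>\<omega>. indicator A (Y \<omega>) * indicator C (X \<omega>) :: real) \<omega>
      = p \<omega> * real_cond_exp M F (\<lambda>\<omega>. indicator C (X \<omega>)) \<omega>"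
    using ci \<open>C \<in> sets borel\<close> \<open>A \<in> sets borel\<close> unfolding cond_indep_given_def p_def F_def by blast
  have "(\<integral>\<omega>\<in>H. indicator A (Y \<omega>) \<partial>M)
      = (\<integral>\<omega>\<in>IZ. indicator A (Y \<omega>) * indicator C (X \<omega>) :: real \<partial>M)"
    unfolding set_lebesgue_integral_def IZ_def H_def
    by (rule Bochner_Integration.integral_cong) (auto split: split_indicator)
  also have "\<dots> = (\<integral>\<omega>\<in>IZ. real_cond_exp M F (\<lambda>\<omega>. indicator A (Y \<omega>) * indicator C (X \<omega>)) \<omega> \<partial>M)"
    by (rule F.real_cond_exp_intA) (auto intro: integrable_const_bound[where B = 1] split: split_indicator)
  also have "\<dots> = (\<integral>\<omega>. (indicator IZ \<omega> * p \<omega>) * real_cond_exp M F (\<lambda>\<omega>. indicator C (X \<omega>)) \<omega> \<partial>M)"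
    unfolding set_lebesgue_integral_def
    by (rule integral_cong_AE) (use ci_AC in \<open>auto simp: mult.assoc\<close>)
  also have "\<dots> = (\<integral>\<omega>. (indicator IZ \<omega> * p \<omega>) * indicator C (X \<omega>) \<partial>M)"
  proof (rule F.real_cond_exp_intg(2))
    show "integrable M (\<lambda>\<omega>. indicator IZ \<omega> * p \<omega> * indicator C (X \<omega>))"
      by (rule Bochner_Integration.integrable_bound[OF \<open>integrable M p\<close>]) (auto split: split_indicator)
  qed simp_all
  also have "\<dots> = (\<integral>\<omega>\<in>H. p \<omega> \<partial>M)"
    unfolding set_lebesgue_integral_def IZ_def H_def
    by (rule Bochner_Integration.integral_cong) (auto split: split_indicator)
  finally show ?thesis
    unfolding p_def F_def .
qed

lemma (in prob_space) cond_indep_given_set_integral: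
  fixes Y :: "'a \<Rightarrow> 'b::topological_space" and X :: "'a \<Rightarrow> 'c::topological_space"
    and Z :: "'a \<Rightarrow> 'e::topological_space"
  assumes ci: "cond_indep_given M Y X Z"
    and [measurable]: "random_variable borel Y" "random_variable borel X" "random_variable borel Z"
      "A \<in> sets borel"
    and G: "G \<in> sigma_sets (space M) (vimage_rectangles (space M) X borel Z borel)"
  shows "(\<integral>\<omega>\<in>G. indicator A (Y \<omega>) \<partial>M)
    = (\<integral>\<omega>\<in>G. real_cond_exp M (vimage_algebra (space M) Z borel) (\<lambda>\<omega>. indicator A (Y \<omega>)) \<omega> \<partial>M)"
proof (rule set_integral_eq_on_sigma_sets[OF _ _ Int_stable_vimage_rectangles _ _ _ G])
  interpret F: sigma_finite_subalgebra M "vimage_algebra (space M) Z borel"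
    by (rule sigma_finite_subalgebra_vimage_algebra) simp
  show int_A: "integrable M (\<lambda>\<omega>. indicator A (Y \<omega>) :: real)"
    by (rule integrable_const_bound[where B = 1]) (auto split: split_indicator)
  then show "integrable M (real_cond_exp M (vimage_algebra (space M) Z borel) (\<lambda>\<omega>. indicator A (Y \<omega>)))"
    by (rule F.real_cond_exp_int(1))
  have rect: "(\<integral>\<omega>\<in>H. indicator A (Y \<omega>) \<partial>M)
      = (\<integral>\<omega>\<in>H. real_cond_exp M (vimage_algebra (space M) Z borel) (\<lambda>\<omega>. indicator A (Y \<omega>)) \<omega> \<partial>M)"
    if "H \<in> vimage_rectangles (space M) X borel Z borel" for H
    using that unfolding vimage_rectangles_def
    by (auto intro!: cond_indep_given_set_integral_rectangle[OF ci])
  then show "\<And>H. H \<in> vimage_rectangles (space M) X borel Z borel \<Longrightarrow> (\<integral>\<omega>\<in>H. indicator A (Y \<omega>) \<partial>M)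
      = (\<integral>\<omega>\<in>H. real_cond_exp M (vimage_algebra (space M) Z borel) (\<lambda>\<omega>. indicator A (Y \<omega>)) \<omega> \<partial>M)" .
  have "space M \<in> vimage_rectangles (space M) X borel Z borel"
    unfolding vimage_rectangles_def by (intro CollectI exI[of _ UNIV]) auto
  from rect[OF this] show "(\<integral>\<omega>\<in>space M. indicator A (Y \<omega>) \<partial>M)
      = (\<integral>\<omega>\<in>space M. real_cond_exp M (vimage_algebra (space M) Z borel) (\<lambda>\<omega>. indicator A (Y \<omega>)) \<omega> \<partial>M)" .
qed (rule vimage_rectangles_subset_sets; simp)

lemma (in prob_space) indep_rv_noise_Pair:
  fixes Y :: "'a \<Rightarrow> 'b::second_countable_topology" and Z :: "'a \<Rightarrow> 'c::second_countable_topology"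
    and eps X :: "'a \<Rightarrow> 'x::{second_countable_topology, real_normed_vector}" and \<phi> :: "'c \<Rightarrow> 'x"
  assumes [measurable]: "random_variable borel Y" "random_variable borel Z" "random_variable borel eps"
      "\<phi> \<in> borel_measurable borel"
    and X: "\<forall>\<omega>\<in>space M. X \<omega> = \<phi> (Z \<omega>) + eps \<omega>"
    and indep: "indep_rv M eps Z" and ci: "cond_indep_given M Y X Z"
  shows "indep_rv M eps (\<lambda>\<omega>. (Y \<omega>, Z \<omega>))"
proof (rule indep_rv_PairI)
  have [measurable]: "random_variable borel X"
    by (rule measurable_cong[where f = "\<lambda>\<omega>. \<phi> (Z \<omega>) + eps \<omega>", THEN iffD1]) (use X in auto)
  fix A :: "'b set" and D :: "'c set" and E :: "'x set"
  assume [measurable]: "A \<in> sets borel" "D \<in> sets borel" "E \<in> sets borel"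
  interpret F: sigma_finite_subalgebra M "vimage_algebra (space M) Z borel"
    by (rule sigma_finite_subalgebra_vimage_algebra) simp
  define p where "p = real_cond_exp M (vimage_algebra (space M) Z borel) (\<lambda>\<omega>. indicator A (Y \<omega>))"
  define IZ where "IZ = Z -` D \<inter> space M"
  have [measurable]: "p \<in> borel_measurable (vimage_algebra (space M) Z borel)" "p \<in> borel_measurable M"
      "IZ \<in> sets (vimage_algebra (space M) Z borel)" "IZ \<in> sets M"
    unfolding p_def IZ_def by (simp_all add: in_vimage_algebra)
  have int_A: "integrable M (\<lambda>\<omega>. indicator A (Y \<omega>) :: real)"
    by (rule integrable_const_bound[where B = 1]) (auto split: split_indicator)
  then have "integrable M p"
    unfolding p_def by (rule F.real_cond_exp_int(1))
  define G where "G = {\<omega>\<in>space M. Z \<omega> \<in> D \<and> eps \<omega> \<in> E}"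
  have G: "G \<in> sigma_sets (space M) (vimage_rectangles (space M) X borel Z borel)"
    unfolding G_def by (rule additive_noise_event_in_sigma_vimage_rectangles[where \<phi> = \<phi>, OF _ _ _ _ _ X]) simp_all
  have "prob {\<omega>\<in>space M. Y \<omega> \<in> A \<and> Z \<omega> \<in> D \<and> eps \<omega> \<in> E} = (\<integral>\<omega>\<in>G. indicator A (Y \<omega>) \<partial>M)"
    by (subst set_integral_indicator_comp[where N = borel]) (auto simp: G_def intro!: arg_cong[where f = prob])
  also have "\<dots> = (\<integral>\<omega>\<in>G. p \<omega> \<partial>M)"
    unfolding p_def by (rule cond_indep_given_set_integral[OF ci _ _ _ _ G]) simp_all
  also have "\<dots> = (\<integral>\<omega>. (indicator IZ \<omega> * p \<omega>) * indicator E (eps \<omega>) \<partial>M)"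
    unfolding set_lebesgue_integral_def G_def IZ_def
    by (rule Bochner_Integration.integral_cong) (auto split: split_indicator)
  also have "\<dots> = prob {\<omega>\<in>space M. eps \<omega> \<in> E} * (\<integral>\<omega>. indicator IZ \<omega> * p \<omega> \<partial>M)"
  proof (rule integral_mult_indicator_indep[OF indep])
    show "integrable M (\<lambda>\<omega>. indicator IZ \<omega> * p \<omega>)"
      by (rule Bochner_Integration.integrable_bound[OF \<open>integrable M p\<close>]) (auto split: split_indicator)
  qed simp_all
  also have "(\<integral>\<omega>. indicator IZ \<omega> * p \<omega> \<partial>M) = (\<integral>\<omega>\<in>IZ. p \<omega> \<partial>M)"
    by (simp add: set_lebesgue_integral_def)
  also have "\<dots> = (\<integral>\<omega>\<in>IZ. indicator A (Y \<omega>) \<partial>M)"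
    unfolding p_def by (rule F.real_cond_exp_intA[OF int_A, symmetric]) simp
  also have "\<dots> = prob {\<omega>\<in>space M. Y \<omega> \<in> A \<and> Z \<omega> \<in> D}"
    by (subst set_integral_indicator_comp[where N = borel]) (auto simp: IZ_def intro!: arg_cong[where f = prob])
  finally show "prob {\<omega>\<in>space M. Y \<omega> \<in> A \<and> Z \<omega> \<in> D \<and> eps \<omega> \<in> E}
      = prob {\<omega>\<in>space M. Y \<omega> \<in> A \<and> Z \<omega> \<in> D} * prob {\<omega>\<in>space M. eps \<omega> \<in> E}"
    by (simp add: mult.commute)
qed simp_all

lemma (in prob_space) indep_rv_projected_noise:
  fixes Y :: "'a \<Rightarrow> 'b::second_countable_topology" and Z :: "'a \<Rightarrow> 'c::second_countable_topology"
    and eps X :: "'a \<Rightarrow> 'x::{second_countable_topology, real_normed_vector}" and \<phi> :: "'c \<Rightarrow> 'x"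
    and f :: "'x \<Rightarrow> 'e::topological_space" and g :: "'x \<Rightarrow> 'g::second_countable_topology"
    and G :: "('b \<times> 'c) \<times> 'g \<Rightarrow> 'v::topological_space"
  assumes [measurable]: "random_variable borel Y" "random_variable borel Z" "random_variable borel eps"
      "\<phi> \<in> borel_measurable borel" "f \<in> borel_measurable borel" "g \<in> borel_measurable borel"
      "G \<in> borel_measurable ((borel \<Otimes>\<^sub>M borel) \<Otimes>\<^sub>M borel)"
    and X: "\<forall>\<omega>\<in>space M. X \<omega> = \<phi> (Z \<omega>) + eps \<omega>"
    and indep: "indep_rv M eps Z" and ci: "cond_indep_given M Y X Z"
    and indep_f_g: "indep_rv M (\<lambda>\<omega>. f (eps \<omega>)) (\<lambda>\<omega>. g (eps \<omega>))"
  shows "indep_rv M (\<lambda>\<omega>. f (eps \<omega>)) (\<lambda>\<omega>. G ((Y \<omega>, Z \<omega>), g (eps \<omega>)))"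
proof -
  have "indep_rv M eps (\<lambda>\<omega>. (Y \<omega>, Z \<omega>))"
    by (rule indep_rv_noise_Pair[OF _ _ _ _ X indep ci]) simp_all
  then have "indep_rv M (\<lambda>\<omega>. f (eps \<omega>)) (\<lambda>\<omega>. ((Y \<omega>, Z \<omega>), g (eps \<omega>)))"
    by (rule indep_rv_Pair_compose[OF _ indep_f_g]) simp_all
  moreover have "G \<in> borel_measurable borel"
    using \<open>G \<in> borel_measurable ((borel \<Otimes>\<^sub>M borel) \<Otimes>\<^sub>M borel)\<close> by (simp add: borel_prod)
  ultimately show ?thesis
    by (auto dest: indep_rv_compose[where f = "\<lambda>w. w"])
qed

lemma (in prob_space) regression_function_exists:
  fixes S :: "'a \<Rightarrow> real" and V :: "'a \<Rightarrow> 'v"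
  assumes S: "integrable M S" "\<And>\<omega>. 0 \<le> S \<omega>" and V[measurable]: "V \<in> measurable M N"
  shows "\<exists>h\<in>borel_measurable N. (\<forall>v. 0 \<le> h v) \<and> (\<forall>a\<in>sets N.
    (\<integral>\<^sup>+\<omega>. ennreal (S \<omega>) * indicator a (V \<omega>) \<partial>M) = (\<integral>\<^sup>+\<omega>. ennreal (h (V \<omega>)) * indicator a (V \<omega>) \<partial>M))"
proof -
  have [measurable]: "S \<in> borel_measurable M"
    using S(1) by simp
  define \<nu> where "\<nu> = distr M N V"
  define \<mu> where "\<mu> = distr (density M S) N V"
  interpret \<nu>: prob_space \<nu>
    unfolding \<nu>_def by (rule prob_space_distr) simp
  have sets_\<mu>: "sets \<mu> = sets \<nu>"
    unfolding \<mu>_def \<nu>_def by simp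
  have \<mu>: "emeasure \<mu> a = (\<integral>\<^sup>+\<omega>. ennreal (S \<omega>) * indicator a (V \<omega>) \<partial>M)" if [measurable]: "a \<in> sets N" for a
  proof -
    have "emeasure \<mu> a = emeasure (density M S) (V -` a \<inter> space M)"
      unfolding \<mu>_def by (subst emeasure_distr) simp_all
    also have "\<dots> = (\<integral>\<^sup>+\<omega>. ennreal (S \<omega>) * indicator (V -` a \<inter> space M) \<omega> \<partial>M)"
      by (rule emeasure_density) simp_all
    finally show ?thesis
      by (simp add: indicator_def conj_commute cong: nn_integral_cong)
  qed
  have "emeasure \<mu> (space \<mu>) = (\<integral>\<^sup>+\<omega>. ennreal (S \<omega>) * indicator (space N) (V \<omega>) \<partial>M)"
    using \<mu>[of "space N"] by (simp add: \<mu>_def)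
  also have "\<dots> = (\<integral>\<^sup>+\<omega>. ennreal (S \<omega>) \<partial>M)"
    by (rule nn_integral_cong) (simp add: measurable_space[OF V])
  also have "\<dots> < \<infinity>"
    using S by (simp add: integrable_iff_bounded abs_of_nonneg)
  finally have "finite_measure \<mu>"
    by (intro finite_measureI) simp
  have ac: "absolutely_continuous \<nu> \<mu>"
    unfolding \<nu>_def \<mu>_def by (rule absolutely_continuous_distr) (simp_all add: absolutely_continuousI_density)
  define r where "r = RN_deriv \<nu> \<mu>"
  have [measurable]: "r \<in> borel_measurable N"
    unfolding r_def using borel_measurable_RN_deriv[of \<nu> \<mu>] by (simp add: \<nu>_def)
  have r_finite: "AE v in \<nu>. r v \<noteq> \<infinity>"
    unfolding r_def using \<open>finite_measure \<mu>\<close>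
    by (intro \<nu>.RN_deriv_finite[OF _ ac sets_\<mu>]) (simp add: finite_measure_def)
  show ?thesis
  proof (intro bexI conjI ballI allI)
    fix a assume [measurable]: "a \<in> sets N"
    have "(\<integral>\<^sup>+\<omega>. ennreal (enn2real (r (V \<omega>))) * indicator a (V \<omega>) \<partial>M)
        = (\<integral>\<^sup>+v. ennreal (enn2real (r v)) * indicator a v \<partial>\<nu>)"
      unfolding \<nu>_def by (subst nn_integral_distr) simp_all
    also have "\<dots> = (\<integral>\<^sup>+v. r v * indicator a v \<partial>\<nu>)"
      by (rule nn_integral_cong_AE) (use r_finite in \<open>auto simp: less_top\<close>)
    also have "\<dots> = emeasure (density \<nu> r) a"
      by (rule emeasure_density[symmetric]) (simp_all add: \<nu>_def)
    also have "density \<nu> r = \<mu>"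
      unfolding r_def by (rule \<nu>.density_RN_deriv[OF ac sets_\<mu>])
    finally show "(\<integral>\<^sup>+\<omega>. ennreal (S \<omega>) * indicator a (V \<omega>) \<partial>M)
        = (\<integral>\<^sup>+\<omega>. ennreal (enn2real (r (V \<omega>))) * indicator a (V \<omega>) \<partial>M)"
      by (simp add: \<mu>)
  qed simp_all
qed

lemma (in prob_space) nn_integral_indep_noise:
  fixes S :: "'a \<Rightarrow> real" and V :: "'a \<Rightarrow> 'v::second_countable_topology"
    and W :: "'a \<Rightarrow> 'w::topological_space" and \<phi> :: "'v \<times> 'w \<Rightarrow> 'x::topological_space"
    and g :: "real \<times> 'v \<Rightarrow> ennreal"
  assumes [measurable]: "random_variable borel S" "random_variable borel V" "random_variable borel W"
      "\<phi> \<in> borel_measurable (borel \<Otimes>\<^sub>M borel)" "g \<in> borel_measurable (borel \<Otimes>\<^sub>M borel)"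
      "Bs \<in> sets borel"
    and indep: "indep_rv M W (\<lambda>\<omega>. (S \<omega>, V \<omega>))"
  shows "(\<integral>\<^sup>+\<omega>. g (S \<omega>, V \<omega>) * indicator Bs (\<phi> (V \<omega>, W \<omega>)) \<partial>M)
    = (\<integral>\<^sup>+w. (\<integral>\<^sup>+\<omega>. g (S \<omega>, V \<omega>) * indicator Bs (\<phi> (V \<omega>, w)) \<partial>M) \<partial>distr M borel W)"
proof -
  define SV where "SV = (\<lambda>\<omega>. (S \<omega>, V \<omega>))"
  have [measurable]: "SV \<in> measurable M (borel \<Otimes>\<^sub>M borel)"
    unfolding SV_def by simp
  interpret SV: prob_space "distr M (borel \<Otimes>\<^sub>M borel) SV"
    by (rule prob_space_distr) simp
  define F where "F = (\<lambda>(w, p). g p * indicator Bs (\<phi> (snd p, w)))"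
  have [measurable]: "F \<in> borel_measurable (borel \<Otimes>\<^sub>M (borel \<Otimes>\<^sub>M borel))"
    unfolding F_def by measurable
  have joint: "distr M (borel \<Otimes>\<^sub>M (borel \<Otimes>\<^sub>M borel)) (\<lambda>\<omega>. (W \<omega>, SV \<omega>))
      = distr M borel W \<Otimes>\<^sub>M distr M (borel \<Otimes>\<^sub>M borel) SV"
    using indep_rv_distribution_eq[OF indep] by (simp add: SV_def borel_prod)
  have "(\<integral>\<^sup>+\<omega>. F (W \<omega>, SV \<omega>) \<partial>M)
      = (\<integral>\<^sup>+q. F q \<partial>distr M (borel \<Otimes>\<^sub>M (borel \<Otimes>\<^sub>M borel)) (\<lambda>\<omega>. (W \<omega>, SV \<omega>)))"
    by (subst nn_integral_distr) simp_all
  also have "\<dots> = (\<integral>\<^sup>+w. (\<integral>\<^sup>+p. F (w, p) \<partial>distr M (borel \<Otimes>\<^sub>M borel) SV) \<partial>distr M borel W)"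
    unfolding joint by (subst SV.nn_integral_fst[symmetric]) simp_all
  also have "\<dots> = (\<integral>\<^sup>+w. (\<integral>\<^sup>+\<omega>. F (w, SV \<omega>) \<partial>M) \<partial>distr M borel W)"
    by (intro nn_integral_cong) (simp add: nn_integral_distr)
  finally show ?thesis
    by (simp add: F_def SV_def)
qed

lemma (in prob_space) real_cond_exp_vimage_algebra_eqI:
  fixes S :: "'a \<Rightarrow> real" and X :: "'a \<Rightarrow> 'x::topological_space" and g :: "'x \<Rightarrow> real"
  assumes S: "integrable M S" "\<And>\<omega>. 0 \<le> S \<omega>" and g: "\<And>x. 0 \<le> g x"
    and [measurable]: "random_variable borel X" "g \<in> borel_measurable borel"
    and eq: "\<And>Bs. Bs \<in> sets borel \<Longrightarrow> (\<integral>\<^sup>+\<omega>. ennreal (S \<omega>) * indicator Bs (X \<omega>) \<partial>M)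
      = (\<integral>\<^sup>+\<omega>. ennreal (g (X \<omega>)) * indicator Bs (X \<omega>) \<partial>M)"
  shows "AE \<omega> in M. real_cond_exp M (vimage_algebra (space M) X borel) S \<omega> = g (X \<omega>)"
proof (rule sigma_finite_subalgebra.real_cond_exp_charact)
  have [measurable]: "S \<in> borel_measurable M"
    using S(1) by simp
  show int_g: "integrable M (\<lambda>\<omega>. g (X \<omega>))"
  proof (rule integrableI_nonneg)
    have "(\<integral>\<^sup>+\<omega>. ennreal (g (X \<omega>)) \<partial>M) = (\<integral>\<^sup>+\<omega>. ennreal (S \<omega>) \<partial>M)"
      using eq[of UNIV] by simp
    also have "\<dots> < \<infinity>"
      using S by (simp add: integrable_iff_bounded abs_of_nonneg)
    finally show "(\<integral>\<^sup>+\<omega>. ennreal (g (X \<omega>)) \<partial>M) < \<infinity>" .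
  qed (simp_all add: g)
  show "sigma_finite_subalgebra M (vimage_algebra (space M) X borel)"
    by (rule sigma_finite_subalgebra_vimage_algebra) simp
  fix A assume "A \<in> sets (vimage_algebra (space M) X borel)"
  then obtain Bs where [measurable]: "Bs \<in> sets borel" and A: "A = X -` Bs \<inter> space M"
    by (auto simp: sets_vimage_algebra2)
  have [measurable]: "A \<in> sets M"
    unfolding A by simp
  have "ennreal (\<integral>\<omega>\<in>A. S \<omega> \<partial>M) = (\<integral>\<^sup>+\<omega>. ennreal (S \<omega>) * indicator Bs (X \<omega>) \<partial>M)"
    by (subst nn_set_integral_eq_set_integral[symmetric])
       (auto simp: S A intro!: nn_integral_cong split: split_indicator)
  also have "\<dots> = (\<integral>\<^sup>+\<omega>. ennreal (g (X \<omega>)) * indicator Bs (X \<omega>) \<partial>M)"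
    by (rule eq) simp
  also have "\<dots> = ennreal (\<integral>\<omega>\<in>A. g (X \<omega>) \<partial>M)"
    by (subst nn_set_integral_eq_set_integral[symmetric])
       (auto simp: int_g g A intro!: nn_integral_cong split: split_indicator)
  finally show "(\<integral>\<omega>\<in>A. S \<omega> \<partial>M) = (\<integral>\<omega>\<in>A. g (X \<omega>) \<partial>M)"
    using S(2) g
    by (subst (asm) ennreal_inj) (auto simp: set_lebesgue_integral_def intro!: integral_nonneg_AE)
next
  show "(\<lambda>\<omega>. g (X \<omega>)) \<in> borel_measurable (vimage_algebra (space M) X borel)"
    by (rule measurable_compose[OF measurable_vimage_algebra1]) simp_all
qed (simp_all add: S g)

lemma (in prob_space) real_cond_exp_factors_through_statistic:
  fixes S :: "'a \<Rightarrow> real" and V :: "'a \<Rightarrow> 'v::second_countable_topology"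
    and W :: "'a \<Rightarrow> 'w::topological_space" and X :: "'a \<Rightarrow> 'x::topological_space"
    and \<phi> :: "'v \<times> 'w \<Rightarrow> 'x" and \<psi> :: "'x \<Rightarrow> 'v"
  assumes S: "integrable M S" "\<And>\<omega>. 0 \<le> S \<omega>"
    and [measurable]: "random_variable borel V" "random_variable borel W"
      "\<phi> \<in> borel_measurable (borel \<Otimes>\<^sub>M borel)" "\<psi> \<in> borel_measurable borel"
    and X: "\<forall>\<omega>\<in>space M. X \<omega> = \<phi> (V \<omega>, W \<omega>)" and V: "\<forall>\<omega>\<in>space M. V \<omega> = \<psi> (X \<omega>)"
    and indep: "indep_rv M W (\<lambda>\<omega>. (S \<omega>, V \<omega>))"
  shows "\<exists>h\<in>borel_measurable borel.
    AE \<omega> in M. real_cond_exp M (vimage_algebra (space M) X borel) S \<omega> = h (\<psi> (X \<omega>))"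
proof -
  have [measurable]: "S \<in> borel_measurable M"
    using S(1) by simp
  have [measurable]: "random_variable borel X"
    by (rule measurable_cong[where f = "\<lambda>\<omega>. \<phi> (V \<omega>, W \<omega>)", THEN iffD1]) (use X in auto)
  obtain h where h_meas[measurable]: "h \<in> borel_measurable borel" and h_nonneg: "\<And>v. 0 \<le> h v"
    and h: "\<And>a. a \<in> sets borel \<Longrightarrow> (\<integral>\<^sup>+\<omega>. ennreal (S \<omega>) * indicator a (V \<omega>) \<partial>M)
      = (\<integral>\<^sup>+\<omega>. ennreal (h (V \<omega>)) * indicator a (V \<omega>) \<partial>M)"
    using regression_function_exists[OF S, of V borel] by auto
  text \<open>Freezing the independent noise \<open>W = w\<close> reduces the claim to the defining property of \<open>h\<close>.\<close>
  have "(\<integral>\<^sup>+\<omega>. ennreal (S \<omega>) * indicator Bs (X \<omega>) \<partial>M)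
      = (\<integral>\<^sup>+\<omega>. ennreal (h (\<psi> (X \<omega>))) * indicator Bs (X \<omega>) \<partial>M)"
    if [measurable]: "Bs \<in> sets borel" for Bs
  proof -
    have inner: "(\<integral>\<^sup>+\<omega>. ennreal (S \<omega>) * indicator Bs (\<phi> (V \<omega>, w)) \<partial>M)
        = (\<integral>\<^sup>+\<omega>. ennreal (h (V \<omega>)) * indicator Bs (\<phi> (V \<omega>, w)) \<partial>M)" for w
    proof -
      have "(\<lambda>v. \<phi> (v, w)) \<in> borel_measurable borel"
        by measurable
      from measurable_sets[OF this \<open>Bs \<in> sets borel\<close>] h[of "(\<lambda>v. \<phi> (v, w)) -` Bs"]
      show ?thesis
        by (simp add: indicator_def)
    qed
    have "(\<integral>\<^sup>+\<omega>. ennreal (S \<omega>) * indicator Bs (X \<omega>) \<partial>M)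
        = (\<integral>\<^sup>+\<omega>. ennreal (fst (S \<omega>, V \<omega>)) * indicator Bs (\<phi> (V \<omega>, W \<omega>)) \<partial>M)"
      by (rule nn_integral_cong) (simp add: X)
    also have "\<dots> = (\<integral>\<^sup>+w. (\<integral>\<^sup>+\<omega>. ennreal (fst (S \<omega>, V \<omega>)) * indicator Bs (\<phi> (V \<omega>, w)) \<partial>M)
        \<partial>distr M borel W)"
      by (rule nn_integral_indep_noise[where g = "\<lambda>p. ennreal (fst p)", OF _ _ _ _ _ _ indep]) simp_all
    also have "\<dots> = (\<integral>\<^sup>+w. (\<integral>\<^sup>+\<omega>. ennreal (h (snd (S \<omega>, V \<omega>))) * indicator Bs (\<phi> (V \<omega>, w)) \<partial>M)
        \<partial>distr M borel W)"
      using inner by simp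
    also have "\<dots> = (\<integral>\<^sup>+\<omega>. ennreal (h (snd (S \<omega>, V \<omega>))) * indicator Bs (\<phi> (V \<omega>, W \<omega>)) \<partial>M)"
      by (rule nn_integral_indep_noise[where g = "\<lambda>p. ennreal (h (snd p))", OF _ _ _ _ _ _ indep, symmetric])
        simp_all
    also have "\<dots> = (\<integral>\<^sup>+\<omega>. ennreal (h (\<psi> (X \<omega>))) * indicator Bs (X \<omega>) \<partial>M)"
      by (rule nn_integral_cong) (metis X V snd_conv)
    finally show ?thesis .
  qed
  then have "AE \<omega> in M. real_cond_exp M (vimage_algebra (space M) X borel) S \<omega> = h (\<psi> (X \<omega>))"
    by (intro real_cond_exp_vimage_algebra_eqI[where g = "\<lambda>x. h (\<psi> x)"] S) (simp_all add: h_nonneg)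
  with h_meas show ?thesis
    by blast
qed

lemma (in prob_space) is_regression_fn_factor:
  fixes Y :: "'a \<Rightarrow> real" and X :: "'a \<Rightarrow> 'x::topological_space" and \<psi> :: "'x \<Rightarrow> 'v::topological_space"
  assumes reg: "is_regression_fn M Y X eta"
    and [measurable]: "random_variable borel X" "\<psi> \<in> borel_measurable borel"
    and "\<exists>h\<in>borel_measurable borel. AE \<omega> in M. real_cond_exp M (vimage_algebra (space M) X borel)
      (\<lambda>\<omega>. if Y \<omega> = 1 then 1 else 0) \<omega> = h (\<psi> (X \<omega>))"
  shows "\<exists>eta_t f_t. eta_t \<in> borel_measurable borel \<and> f_t \<in> borel_measurable borel \<and>
    (AE x in distr M borel X. eta x = eta_t (\<psi> x) \<and> bayes_rule eta x = f_t (\<psi> x))"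
proof -
  obtain h where [measurable]: "h \<in> borel_measurable borel" and h: "AE \<omega> in M.
      real_cond_exp M (vimage_algebra (space M) X borel) (\<lambda>\<omega>. if Y \<omega> = 1 then 1 else 0) \<omega> = h (\<psi> (X \<omega>))"
    using assms(4) by blast
  have [measurable]: "eta \<in> borel_measurable borel"
    and eta: "AE \<omega> in M. eta (X \<omega>) = real_cond_exp M (vimage_algebra (space M) X borel)
      (\<lambda>\<omega>. if Y \<omega> = 1 then 1 else 0) \<omega>"
    using reg unfolding is_regression_fn_def by auto
  have "AE \<omega> in M. eta (X \<omega>) = h (\<psi> (X \<omega>)) \<and> bayes_rule eta (X \<omega>) = bayes_rule h (\<psi> (X \<omega>))"
    using eta h by eventually_elim (simp add: bayes_rule_def)
  moreover have "{x \<in> space borel. eta x = h (\<psi> x) \<and> bayes_rule eta x = bayes_rule h (\<psi> x)} \<in> sets borel"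
    unfolding bayes_rule_def by measurable
  ultimately have "AE x in distr M borel X. eta x = h (\<psi> x) \<and> bayes_rule eta x = bayes_rule h (\<psi> x)"
    by (subst AE_distr_iff) simp_all
  moreover have "bayes_rule h \<in> borel_measurable borel"
    unfolding bayes_rule_def by measurable
  ultimately show ?thesis
    using \<open>h \<in> borel_measurable borel\<close> by blast
qed

theorem proposition1:
  fixes M :: "'a measure"
    and Z :: "'a \<Rightarrow> real ^ 'k::{finite,linorder}"
    and Y :: "'a \<Rightarrow> real"
    and eps :: "'a \<Rightarrow> real ^ 'd::finite"
    and X :: "'a \<Rightarrow> real ^ 'd"
    and B :: "real ^ 'k::{finite,linorder} ^ 'd"
    and lam :: "'k \<Rightarrow> real"
  assumes prob: "prob_space M"
    and Z_meas: "Z \<in> borel_measurable M"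
    and Y_meas: "Y \<in> borel_measurable M"
    and Y_vals: "\<forall>\<omega>\<in>space M. Y \<omega> \<in> {-1, 1}"
    and Z_given_Y_density: "\<forall>y\<in>{-1, 1}. \<forall>A\<in>sets lborel.
          emeasure lborel A = 0 \<longrightarrow> measure M {\<omega>\<in>space M. Z \<omega> \<in> A \<and> Y \<omega> = y} = 0"
    and Z_sq_int: "\<forall>i. integrable M (\<lambda>\<omega>. (Z \<omega> $ i)^2)"
    and Z_var: "\<forall>i j. integral\<^sup>L M (\<lambda>\<omega>. (Z \<omega> $ i - integral\<^sup>L M (\<lambda>\<omega>'. Z \<omega>' $ i))
                                     * (Z \<omega> $ j - integral\<^sup>L M (\<lambda>\<omega>'. Z \<omega>' $ j)))
                   = (if i = j then 1 else 0)"
    and eps_meas: "eps \<in> borel_measurable M"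
    and eps_int: "\<forall>i. integrable M (\<lambda>\<omega>. eps \<omega> $ i)"
    and eps_mean: "\<forall>i. integral\<^sup>L M (\<lambda>\<omega>. eps \<omega> $ i) = 0"
    and eps_indep_Z: "indep_rv M eps Z"
    and eps_cont: "absolutely_continuous lborel (distr M lborel eps)"
    and X_def: "\<forall>\<omega>\<in>space M. X \<omega> = B *v Z \<omega> + eps \<omega>"
    and BtB: "transpose B ** B = (\<chi> i j. if i = j then lam i else 0)"
    and lam_pos: "\<forall>i. lam i > 0"
    and lam_ord: "\<forall>i j. i \<le> j \<longrightarrow> lam j \<le> lam i"
    and proj_indep: "indep_rv M
          (\<lambda>\<omega>. (mat 1 - B ** matrix_inv (transpose B ** B) ** transpose B) *v eps \<omega>)
          (\<lambda>\<omega>. transpose B *v eps \<omega>)"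
    and Y_cond_indep: "cond_indep_given M Y X Z"
  shows "\<forall>eta. is_regression_fn M Y X eta \<longrightarrow>
           (\<exists>eta_t f_t. eta_t \<in> borel_measurable (borel :: (real ^ 'k::{finite,linorder}) measure) \<and>
              f_t \<in> borel_measurable (borel :: (real ^ 'k::{finite,linorder}) measure) \<and>
              (AE x in distr M borel X.
                 eta x = eta_t (transpose (\<chi> r c. B $ r $ c / sqrt (lam c)) *v x) \<and>
                 bayes_rule eta x = f_t (transpose (\<chi> r c. B $ r $ c / sqrt (lam c)) *v x)))"
proof (intro allI impI)
  fix eta assume reg: "is_regression_fn M Y X eta"
  interpret prob_space M by (rule prob)
  note [measurable] = Z_meas Y_meas eps_meas
  have [measurable]: "random_variable borel X"
    by (rule measurable_cong[where f = "\<lambda>\<omega>. B *v Z \<omega> + eps \<omega>", THEN iffD1]) (use X_def in auto)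
  define U where "U = (\<chi> r c. B $ r $ c / sqrt (lam c))"
  define P where "P = B ** matrix_inv (transpose B ** B) ** transpose B"
  define D where "D = diag_mat (\<lambda>c. inverse (sqrt (lam c)))"
  define V where "V = (\<lambda>\<omega>. (transpose U ** B) *v Z \<omega> + D *v (transpose B *v eps \<omega>))"
  text \<open>The simp rule \<open>transpose_matrix_vector\<close> would turn \<open>transpose U *v x\<close> into \<open>x v* U\<close>
    and break the matching against the lemmas below, so it is disabled throughout.\<close>
  have V_eq: "\<forall>\<omega>\<in>space M. V \<omega> = transpose U *v X \<omega>"
    using X_def by (simp add: V_def U_def D_def transpose_scaled_loadings_mult del: transpose_matrix_vector)
  have "transpose B ** B = diag_mat lam"
    unfolding diag_mat_def by (rule BtB)
  from scaled_loadings_decomposition[OF this] lam_pos X_def V_eq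
  have X_eq: "\<forall>\<omega>\<in>space M. X \<omega> = (\<lambda>(v, w). U *v v + w) (V \<omega>, (mat 1 - P) *v eps \<omega>)"
    by (simp add: U_def P_def del: transpose_matrix_vector)
  have "indep_rv M (\<lambda>\<omega>. (mat 1 - P) *v eps \<omega>)
      (\<lambda>\<omega>. (\<lambda>q. (if fst (fst q) = (1::real) then 1 else 0 :: real,
          (transpose U ** B) *v snd (fst q) + D *v snd q)) ((Y \<omega>, Z \<omega>), transpose B *v eps \<omega>))"
    by (rule indep_rv_projected_noise[OF _ _ _ _ _ _ _ X_def eps_indep_Z Y_cond_indep proj_indep[folded P_def]])
      measurable
  then have indep: "indep_rv M (\<lambda>\<omega>. (mat 1 - P) *v eps \<omega>) (\<lambda>\<omega>. (if Y \<omega> = 1 then 1 else 0 :: real, V \<omega>))"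
    by (simp add: V_def)
  have [measurable]: "random_variable borel V"
    unfolding V_def by measurable
  have h: "\<exists>h\<in>borel_measurable borel. AE \<omega> in M. real_cond_exp M (vimage_algebra (space M) X borel)
      (\<lambda>\<omega>. if Y \<omega> = 1 then 1 else 0) \<omega> = h (transpose U *v X \<omega>)"
  proof (rule real_cond_exp_factors_through_statistic[OF _ _ _ _ _ _ X_eq V_eq indep])
    show "integrable M (\<lambda>\<omega>. if Y \<omega> = 1 then 1 else 0 :: real)"
      by (rule integrable_const_bound[where B = 1]) auto
  qed (simp_all del: transpose_matrix_vector)
  have "\<exists>eta_t f_t. eta_t \<in> borel_measurable borel \<and> f_t \<in> borel_measurable borel \<and>
      (AE x in distr M borel X. eta x = eta_t (transpose U *v x) \<and> bayes_rule eta x = f_t (transpose U *v x))"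
    by (rule is_regression_fn_factor[OF reg _ _ h]) (simp_all del: transpose_matrix_vector)
  then show "\<exists>eta_t f_t. eta_t \<in> borel_measurable borel \<and> f_t \<in> borel_measurable borel \<and>
      (AE x in distr M borel X. eta x = eta_t (transpose (\<chi> r c. B $ r $ c / sqrt (lam c)) *v x) \<and>
         bayes_rule eta x = f_t (transpose (\<chi> r c. B $ r $ c / sqrt (lam c)) *v x))"
    unfolding U_def .
qed

end
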